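(* Let $\mathbb{H}$ be a quasiconcave classical entropy. Then its maximal extension is additive on classical channels: for classical channels $\mathcal{N}$ from $X$ to $Y$ and $\mathcal{M}$ from $X'$ to $Y'$, $\overline{\mathbb{H}}(YY'|XX')_{\mathcal{N}\otimes\mathcal{M}}=\overline{\mathbb{H}}(Y|X)_{\mathcal{N}}+\overline{\mathbb{H}}(Y'|X')_{\mathcal{M}}$.
   Context: A classical entropy is a function $\mathbb{H}$ on $\bigcup_{n}\mathrm{Prob}(n)$ that is Schur-concave ($\mathbf{p}\succ\mathbf{q}\Rightarrow\mathbb{H}(\mathbf{p})\le\mathbb{H}(\mathbf{q})$, comparing vectors of different lengths after zero-padding) and additive under tensor products; quasiconcave means $\mathbb{H}(\sum_i\lambda_i\mathbf{p}_i)\ge\min_i\mathbb{H}(\mathbf{p}_i)$. Classical channels are column-stochastic matrices; $\mathcal{N}\otimes\mathcal{M}$ has columns $\mathcal{N}(\mathbf{e}_x)\otimes\mathcal{M}(\mathbf{e}_{x'})$. Classical channel majorization (same output): $\mathcal{N}\succ\mathcal{M}$ iff $\mathcal{M}=\mathcal{D}^{YZ\to Y}\circ(\mathcal{N}\otimes\mathrm{id}^Z)\circ\mathcal{S}^{X'\to XZ}$ for classical channels $\mathcal{S},\mathcal{D}$ with $\mathcal{D}(\cdot\otimes\mathbf{e}_z)$ doubly stochastic for all $z$; different output sizes are compared after zero-padding. Probability vectors are channels with trivial input. The maximal extension is $\overline{\mathbb{H}}(Y|X)_{\mathcal{N}}:=\inf\{\mathbb{H}(\mathbf{q}):\mathcal{N}\succ\mathbf{q}\}$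 over probability vectors of arbitrary finite length. *)

theory Defs
  imports Complex_Main
begin

definition prob_vec :: "real list \<Rightarrow> bool" where
  "prob_vec p \<longleftrightarrow> (\<forall>x\<in>set p. 0 \<le> x) \<and> sum_list p = 1"

definition pad :: "nat \<Rightarrow> real list \<Rightarrow> real list" where
  "pad n p = p @ replicate (n - length p) 0"

definition majorizes :: "real list \<Rightarrow> real list \<Rightarrow> bool" where
  "majorizes p q \<longleftrightarrow>
     (let n = max (length p) (length q);
          ps = rev (sort (pad n p)); qs = rev (sort (pad n q))
      in (\<forall>k\<le>n. sum_list (take k qs) \<le> sum_list (take k ps)) \<and> sum_list p = sum_list q)"

definition tensor :: "real list \<Rightarrow> real list \<Rightarrow> real list" where
  "tensor p q = concat (map (\<lambda>a. map (\<lambda>b. a * b) q) p)"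

definition schur_concave :: "(real list \<Rightarrow> real) \<Rightarrow> bool" where
  "schur_concave H \<longleftrightarrow>
     (\<forall>p q. prob_vec p \<and> prob_vec q \<and> majorizes p q \<longrightarrow> H p \<le> H q)"

definition additive :: "(real list \<Rightarrow> real) \<Rightarrow> bool" where
  "additive H \<longleftrightarrow> (\<forall>p q. prob_vec p \<and> prob_vec q \<longrightarrow> H (tensor p q) = H p + H q)"

definition classical_entropy :: "(real list \<Rightarrow> real) \<Rightarrow> bool" where
  "classical_entropy H \<longleftrightarrow> schur_concave H \<and> additive H"

definition quasiconcave :: "(real list \<Rightarrow> real) \<Rightarrow> bool" where
  "quasiconcave H \<longleftrightarrow>
     (\<forall>(k::nat) (n::nat) (lam::nat \<Rightarrow> real) (P::nat \<Rightarrow> real list).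
        0 < k \<and> (\<forall>i<k. 0 \<le> lam i) \<and> (\<Sum>i<k. lam i) = 1 \<and>
        (\<forall>i<k. prob_vec (P i) \<and> length (P i) = n) \<longrightarrow>
        H (map (\<lambda>j. \<Sum>i<k. lam i * (P i ! j)) [0..<n]) \<ge> Min ((\<lambda>i. H (P i)) ` {..<k}))"

text \<open>A classical channel from an input alphabet of size nx to an output alphabet of
  size ny is a column-stochastic matrix, represented as the list of its nx columns
  (each a probability vector of length ny).  Entry N(y|x) is N ! x ! y.\<close>

definition channel :: "nat \<Rightarrow> nat \<Rightarrow> real list list \<Rightarrow> bool" where
  "channel nx ny N \<longleftrightarrow> length N = nx \<and> (\<forall>c\<in>set N. prob_vec c \<and> length c = ny)"

definition is_channel :: "real list list \<Rightarrow> bool" where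
  "is_channel N \<longleftrightarrow> N \<noteq> [] \<and> channel (length N) (length (hd N)) N"

definition out_dim :: "real list list \<Rightarrow> nat" where
  "out_dim N = length (hd N)"

text \<open>Tensor product of channels: column (x,x') (index x * |X'| + x') is N(e_x) \<otimes> M(e_x').\<close>

definition chan_tensor :: "real list list \<Rightarrow> real list list \<Rightarrow> real list list" where
  "chan_tensor N M = concat (map (\<lambda>c. map (\<lambda>d. tensor c d) M) N)"

text \<open>Channel majorization with common output size n:
  M = D \<circ> (N \<otimes> id_Z) \<circ> S, with S : X' \<rightarrow> XZ (index (x,z) \<mapsto> x * nz + z),
  D : YZ \<rightarrow> Y (index (y,z) \<mapsto> y * nz + z), each D(\<cdot> \<otimes> e_z) doubly stochastic.\<close>

definition chan_maj_same :: "nat \<Rightarrow> real list list \<Rightarrow> real list list \<Rightarrow> bool" where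
  "chan_maj_same n N M \<longleftrightarrow>
     (\<exists>(nz::nat) S D.
        channel (length M) (length N * nz) S \<and>
        channel (n * nz) n D \<and>
        (\<forall>z<nz. \<forall>y'<n. (\<Sum>y<n. D ! (y * nz + z) ! y') = 1) \<and>
        (\<forall>x'<length M. \<forall>y'<n.
           M ! x' ! y' =
             (\<Sum>x<length N. \<Sum>z<nz. \<Sum>y<n.
                 D ! (y * nz + z) ! y' * (N ! x ! y) * (S ! x' ! (x * nz + z)))))"

definition chan_majorizes :: "real list list \<Rightarrow> real list list \<Rightarrow> bool" where
  "chan_majorizes N M \<longleftrightarrow>
     (let n = max (out_dim N) (out_dim M)
      in chan_maj_same n (map (pad n) N) (map (pad n) M))"

text \<open>Maximal extension: inf of H(q) over probability vectors q (as channels with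
  trivial input, i.e. a single column) with N \<succ> q.\<close>

definition max_ext :: "(real list \<Rightarrow> real) \<Rightarrow> real list list \<Rightarrow> real" where
  "max_ext H N = Inf {H q | q. prob_vec q \<and> chan_majorizes N [q]}"

end

theory Submission
  imports Defs "HOL-Library.Multiset"
begin

text \<open>For a quasiconcave classical entropy the maximal extension of a channel is simply the
  least entropy of its output columns.  Every column is reachable from the channel by
  preprocessing with a deterministic input, which gives one inequality.  Conversely, a
  vector majorized by the channel is a convex combination (weights from the preprocessing)
  of images of padded columns under doubly stochastic matrices; each such image is
  majorized by its column, so by Schur concavity and quasiconcavity its entropy is at
  least the minimum over columns.  Since the columns of the tensor product channel are the
  tensor products of columns, additivity of the entropy then makes the minima add.\<close>

lemma sum_list_map_upt_zero: "sum_list (map f [0..<n]) = (\<Sum>i<n. f i)"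
  by (simp add: interv_sum_list_conv_sum_set_nat atLeast0LessThan)

lemma sum_list_map_conv_sum_nth: "sum_list (map f xs) = (\<Sum>j<length xs. f (xs ! j))"
  by (simp add: sum_list_sum_nth atLeast0LessThan)

lemma sum_list_map_rev_sort:
  fixes f :: "'a::linorder \<Rightarrow> 'b::comm_monoid_add"
  shows "sum_list (map f (rev (sort xs))) = sum_list (map f xs)"
  by (simp only: sum_mset_sum_list[symmetric] mset_map mset_rev mset_sort)

lemma rev_sort_nth_antimono:
  assumes "i \<le> j" "j < length (xs :: 'a::linorder list)"
  shows "rev (sort xs) ! j \<le> rev (sort xs) ! i"
  using assms by (simp add: rev_nth) (rule sorted_nth_mono[OF sorted_sort], auto)

subsection \<open>Doubly stochastic matrices and majorization\<close>

text \<open>The sum of the \<open>k\<close> largest entries of \<open>xs\<close> is the minimum over \<open>t\<close> of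
  \<open>k t + \<Sum>\<^sub>a (a - t)\<^sup>+\<close>, attained at the \<open>k\<close>-th largest entry.\<close>

lemma sum_take_rev_sort_le:
  fixes xs :: "real list"
  assumes "k \<le> length xs"
  shows "sum_list (take k (rev (sort xs))) \<le> real k * t + sum_list (map (\<lambda>a. max (a - t) 0) xs)"
proof -
  define s where "s = rev (sort xs)"
  have ls: "length s = length xs" by (simp add: s_def)
  have "sum_list (take k s) = (\<Sum>j<k. s!j)"
    using sum_list_map_conv_sum_nth[of "\<lambda>a. a" "take k s"] assms ls by simp
  also have "\<dots> = real k * t + (\<Sum>j<k. s!j - t)" by (simp add: sum_subtractf)
  also have "\<dots> \<le> real k * t + (\<Sum>j<k. max (s!j - t) 0)"
    by (intro add_left_mono sum_mono) auto
  also have "(\<Sum>j<k. max (s!j - t) 0) \<le> (\<Sum>j<length s. max (s!j - t) 0)"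
    by (rule sum_mono2) (use assms ls in auto)
  also have "\<dots> = sum_list (map (\<lambda>a. max (a - t) 0) xs)"
    using sum_list_map_conv_sum_nth[of "\<lambda>a. max (a - t) 0" s]
      sum_list_map_rev_sort[of "\<lambda>a. max (a - t) 0" xs]
    by (simp add: s_def)
  finally show ?thesis unfolding s_def by simp
qed

lemma sum_take_rev_sort_eq:
  fixes xs :: "real list"
  assumes "0 < k" "k \<le> length xs" "t = rev (sort xs) ! (k - 1)"
  shows "sum_list (take k (rev (sort xs))) = real k * t + sum_list (map (\<lambda>a. max (a - t) 0) xs)"
proof -
  define s where "s = rev (sort xs)"
  have ls: "length s = length xs" by (simp add: s_def)
  have "sum_list (map (\<lambda>a. max (a - t) 0) xs) = (\<Sum>j<length s. max (s!j - t) 0)"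
    using sum_list_map_conv_sum_nth[of "\<lambda>a. max (a - t) 0" s]
      sum_list_map_rev_sort[of "\<lambda>a. max (a - t) 0" xs]
    by (simp add: s_def)
  also have "\<dots> = (\<Sum>j<k. max (s!j - t) 0) + (\<Sum>j\<in>{k..<length s}. max (s!j - t) 0)"
    using assms ls by (simp add: atLeast0LessThan[symmetric] sum.atLeastLessThan_concat)
  also have "(\<Sum>j\<in>{k..<length s}. max (s!j - t) 0) = 0"
    using assms ls rev_sort_nth_antimono[of "k - 1" _ xs] by (intro sum.neutral) (auto simp: s_def)
  also have "(\<Sum>j<k. max (s!j - t) 0) = (\<Sum>j<k. s!j - t)"
    using assms ls rev_sort_nth_antimono[of _ "k - 1" xs] by (intro sum.cong) (auto simp: s_def)
  finally have "sum_list (map (\<lambda>a. max (a - t) 0) xs) = (\<Sum>j<k. s!j) - real k * t"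
    by (simp add: sum_subtractf)
  moreover have "sum_list (take k s) = (\<Sum>j<k. s ! j)"
    using sum_list_map_conv_sum_nth[of "\<lambda>a. a" "take k s"] assms ls by simp
  ultimately show ?thesis unfolding s_def by simp
qed

lemma majorizes_doubly_stochastic:
  fixes p :: "real list" and A :: "nat \<Rightarrow> nat \<Rightarrow> real"
  defines "n \<equiv> length p"
  assumes nonneg: "\<And>i j. i < n \<Longrightarrow> j < n \<Longrightarrow> 0 \<le> A i j"
    and rows: "\<And>i. i < n \<Longrightarrow> (\<Sum>j<n. A i j) = 1"
    and cols: "\<And>j. j < n \<Longrightarrow> (\<Sum>i<n. A i j) = 1"
  shows "majorizes p (map (\<lambda>i. \<Sum>j<n. A i j * p!j) [0..<n])"
proof -
  define w where "w = map (\<lambda>i. \<Sum>j<n. A i j * p!j) [0..<n]"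
  have lw: "length w = n" by (simp add: w_def)
  have sum_through: "(\<Sum>i<n. \<Sum>j<n. A i j * f j) = (\<Sum>j<n. f j)" for f :: "nat \<Rightarrow> real"
    by (subst sum.swap) (simp add: sum_distrib_right[symmetric] cols)
  have sums: "sum_list p = sum_list w"
    using sum_through[of "(!) p"]
    by (simp add: w_def sum_list_map_upt_zero sum_list_map_conv_sum_nth[of "\<lambda>a. a", simplified] n_def)
  have topk: "sum_list (take k (rev (sort w))) \<le> sum_list (take k (rev (sort p)))"
    if k: "k \<le> n" "0 < k" for k
  proof -
    define t where "t = rev (sort p) ! (k - 1)"
    have pos_part: "max (w!i - t) 0 \<le> (\<Sum>j<n. A i j * max (p!j - t) 0)" if i: "i < n" for i
    proof -
      have "w!i - t = (\<Sum>j<n. A i j * (p!j - t))"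
        using i rows[OF i] by (simp add: w_def right_diff_distrib sum_subtractf sum_distrib_right[symmetric])
      also have "\<dots> \<le> (\<Sum>j<n. A i j * max (p!j - t) 0)"
        using nonneg i by (intro sum_mono mult_left_mono) auto
      moreover have "0 \<le> (\<Sum>j<n. A i j * max (p!j - t) 0)"
        using nonneg i by (intro sum_nonneg mult_nonneg_nonneg) auto
      ultimately show ?thesis by simp
    qed
    have "sum_list (take k (rev (sort w))) \<le> real k * t + (\<Sum>i<n. max (w!i - t) 0)"
      using sum_take_rev_sort_le[of k w t] k lw by (simp add: sum_list_map_conv_sum_nth)
    also have "\<dots> \<le> real k * t + (\<Sum>i<n. \<Sum>j<n. A i j * max (p!j - t) 0)"
      using pos_part by (intro add_left_mono sum_mono) auto
    also have "\<dots> = sum_list (take k (rev (sort p)))"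
      using sum_take_rev_sort_eq[of k p t] k t_def sum_through[of "\<lambda>j. max (p!j - t) 0"]
      by (simp add: sum_list_map_conv_sum_nth n_def)
    finally show ?thesis .
  qed
  have "sum_list (take k (rev (sort w))) \<le> sum_list (take k (rev (sort p)))" if "k \<le> n" for k
    using topk[of k] that by (cases "k = 0") simp_all
  then have "majorizes p w"
    using sums lw by (auto simp: majorizes_def Let_def pad_def n_def)
  then show ?thesis unfolding w_def .
qed

lemma length_pad: "length q \<le> n \<Longrightarrow> length (pad n q) = n"
  by (simp add: pad_def)

lemma pad_eq_self: "length p = n \<Longrightarrow> pad n p = p"
  by (simp add: pad_def)

lemma sum_list_pad: "sum_list (pad n q) = sum_list q"
  by (simp add: pad_def sum_list_replicate)

lemma prob_vec_pad: "prob_vec q \<Longrightarrow> prob_vec (pad n q)"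
  by (auto simp: prob_vec_def pad_def sum_list_replicate)

lemma schur_concave_le:
  "schur_concave H \<Longrightarrow> prob_vec p \<Longrightarrow> prob_vec q \<Longrightarrow> majorizes p q \<Longrightarrow> H p \<le> H q"
  unfolding schur_concave_def by blast

lemma schur_concave_pad_eq:
  assumes "schur_concave H" "prob_vec q" "length q \<le> n"
  shows "H (pad n q) = H q"
proof -
  have l: "length (pad n q) = n" using assms(3) by (rule length_pad)
  have "majorizes q (pad n q)" "majorizes (pad n q) q"
    using l assms(3) pad_eq_self[OF l]
    by (simp_all add: majorizes_def Let_def sum_list_pad max_def)
  then show ?thesis
    using schur_concave_le[OF assms(1)] assms(2) prob_vec_pad[OF assms(2)]
    by (meson order_antisym)
qed

lemma quasiconcave_Min_le:
  assumes "quasiconcave H" "prob_vec s"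
    and P: "\<And>i. i < length s \<Longrightarrow> prob_vec (P i) \<and> length (P i) = n \<and> c \<le> H (P i)"
  shows "c \<le> H (map (\<lambda>j. \<Sum>i<length s. s ! i * P i ! j) [0..<n])"
proof -
  have "s \<noteq> []" and "\<forall>i<length s. 0 \<le> s ! i" and "(\<Sum>i<length s. s ! i) = 1"
    using assms(2) sum_list_map_conv_sum_nth[of "\<lambda>a. a" s] by (auto simp: prob_vec_def)
  then have "Min ((\<lambda>i. H (P i)) ` {..<length s}) \<le> H (map (\<lambda>j. \<Sum>i<length s. s ! i * P i ! j) [0..<n])"
    using assms(1) P unfolding quasiconcave_def by blast
  moreover have "c \<le> Min ((\<lambda>i. H (P i)) ` {..<length s})"
    using \<open>s \<noteq> []\<close> P by (subst Min_ge_iff) auto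
  ultimately show ?thesis by linarith
qed

lemma is_channel_column:
  "is_channel N \<Longrightarrow> c \<in> set N \<Longrightarrow> prob_vec c \<and> length c = out_dim N"
  unfolding is_channel_def channel_def out_dim_def by blast

lemma channel_entry_nonneg: "channel nx ny N \<Longrightarrow> x < nx \<Longrightarrow> y < ny \<Longrightarrow> 0 \<le> N ! x ! y"
  by (simp add: channel_def prob_vec_def) (metis nth_mem)

lemma channel_column_sum: "channel nx ny N \<Longrightarrow> x < nx \<Longrightarrow> (\<Sum>y<ny. N ! x ! y) = 1"
  using sum_list_map_conv_sum_nth[of "\<lambda>a. a" "N ! x"] by (auto simp: channel_def prob_vec_def)

lemma pair_index_less:
  assumes "(y::nat) < n" "z < nz"
  shows "y * nz + z < n * nz"
proof -
  have "Suc y * nz \<le> n * nz" using assms by (intro mult_le_mono1) simp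
  then show ?thesis using assms by simp
qed

lemma sum_pair_index: "(\<Sum>i<a * b. f i) = (\<Sum>x<a. \<Sum>z<(b::nat). f (x * b + z))"
proof -
  have "(\<Sum>i<a * b. f i) = (\<Sum>x<a. sum f {x * b..<x * b + b})" by (rule sum.nat_group[symmetric])
  also have "\<dots> = (\<Sum>x<a. \<Sum>z<b. f (x * b + z))"
  proof (rule sum.cong[OF refl])
    fix x
    have "sum f {0 + x * b..<b + x * b} = (\<Sum>z\<in>{0..<b}. f (z + x * b))"
      by (rule sum.shift_bounds_nat_ivl)
    then show "sum f {x * b..<x * b + b} = (\<Sum>z<b. f (x * b + z))"
      by (simp add: atLeast0LessThan add.commute)
  qed
  finally show ?thesis .
qed

subsection \<open>The lower bound\<close>

text \<open>\<open>chan_block D nz n z p\<close> is \<open>D(p \<otimes> e\<^sub>z)\<close>, the output of the postprocessing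
  channel on the input \<open>p\<close> with side register in state \<open>z\<close>.\<close>

definition chan_block :: "real list list \<Rightarrow> nat \<Rightarrow> nat \<Rightarrow> nat \<Rightarrow> real list \<Rightarrow> real list" where
  "chan_block D nz n z p = map (\<lambda>y'. \<Sum>y<n. D ! (y * nz + z) ! y' * p ! y) [0..<n]"

lemma prob_vec_chan_block:
  assumes D: "channel (n * nz) n D" and "z < nz" "prob_vec p" "length p = n"
  shows "prob_vec (chan_block D nz n z p)"
proof -
  have p: "\<And>y. y < n \<Longrightarrow> 0 \<le> p ! y" using assms(3,4) by (auto simp: prob_vec_def)
  have "(\<Sum>y'<n. \<Sum>y<n. D ! (y * nz + z) ! y' * p ! y) = (\<Sum>y<n. p ! y)"
    using channel_column_sum[OF D pair_index_less] \<open>z < nz\<close>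
    by (subst sum.swap) (simp add: sum_distrib_right[symmetric])
  also have "\<dots> = 1"
    using assms(3,4) sum_list_map_conv_sum_nth[of "\<lambda>a. a" p] by (simp add: prob_vec_def)
  finally show ?thesis
    using channel_entry_nonneg[OF D pair_index_less] \<open>z < nz\<close> p
    by (auto simp: prob_vec_def chan_block_def sum_list_map_upt_zero
        intro!: sum_nonneg mult_nonneg_nonneg)
qed

lemma majorizes_chan_block:
  assumes D: "channel (n * nz) n D" and ds: "\<forall>y'<n. (\<Sum>y<n. D ! (y * nz + z) ! y') = 1"
    and "z < nz" "length p = n"
  shows "majorizes p (chan_block D nz n z p)"
  using majorizes_doubly_stochastic[of p "\<lambda>y' y. D ! (y * nz + z) ! y'"] assms
    channel_entry_nonneg[OF D pair_index_less] channel_column_sum[OF D pair_index_less]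
  by (simp add: chan_block_def)

text \<open>A vector majorized by \<open>N\<close> is the mixture, with the preprocessing weights \<open>s\<close>,
  of the vectors \<open>D(c\<^sub>x \<otimes> e\<^sub>z)\<close> for the padded columns \<open>c\<^sub>x\<close> of \<open>N\<close>; the pair
  \<open>(x, z)\<close> is encoded as the index \<open>x * nz + z\<close>.\<close>

lemma chan_majorizes_singletonE:
  assumes "chan_majorizes N [q]" and n: "n = max (out_dim N) (length q)"
  obtains nz s D where "prob_vec s" "length s = length N * nz" "channel (n * nz) n D"
    "\<forall>z<nz. \<forall>y'<n. (\<Sum>y<n. D ! (y * nz + z) ! y') = 1"
    "pad n q = map (\<lambda>j. \<Sum>i<length s.
        s ! i * chan_block D nz n (i mod nz) (pad n (N ! (i div nz))) ! j) [0..<n]"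
proof -
  have "out_dim [q] = length q" by (simp add: out_dim_def)
  then obtain nz S D where S: "channel 1 (length N * nz) S" and D: "channel (n * nz) n D"
    and ds: "\<forall>z<nz. \<forall>y'<n. (\<Sum>y<n. D ! (y * nz + z) ! y') = 1"
    and eq: "\<forall>y'<n. pad n q ! y' = (\<Sum>x<length N. \<Sum>z<nz. \<Sum>y<n.
       D ! (y * nz + z) ! y' * (map (pad n) N ! x ! y) * (S ! 0 ! (x * nz + z)))"
    using assms unfolding chan_majorizes_def chan_maj_same_def Let_def by auto
  define s where "s = S ! 0"
  have s: "prob_vec s" "length s = length N * nz" using S by (auto simp: channel_def s_def)
  have "pad n q = map (\<lambda>j. \<Sum>i<length s.
      s ! i * chan_block D nz n (i mod nz) (pad n (N ! (i div nz))) ! j) [0..<n]"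
  proof (rule nth_equalityI)
    show "length (pad n q) = length (map (\<lambda>j. \<Sum>i<length s.
        s ! i * chan_block D nz n (i mod nz) (pad n (N ! (i div nz))) ! j) [0..<n])"
      using n by (simp add: length_pad)
  next
    fix j assume "j < length (pad n q)"
    then have j: "j < n" using n by (simp add: length_pad)
    have "(\<Sum>i<length s. s ! i * chan_block D nz n (i mod nz) (pad n (N ! (i div nz))) ! j)
        = (\<Sum>x<length N. \<Sum>z<nz.
             s ! (x * nz + z) * chan_block D nz n z (pad n (N ! x)) ! j)"
      unfolding s(2) sum_pair_index by (intro sum.cong) auto
    also have "\<dots> = (\<Sum>x<length N. \<Sum>z<nz. \<Sum>y<n.
        D ! (y * nz + z) ! j * (map (pad n) N ! x ! y) * (S ! 0 ! (x * nz + z)))"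
      using j by (intro sum.cong) (auto simp: chan_block_def sum_distrib_left s_def mult_ac)
    also have "\<dots> = pad n q ! j" using eq j by simp
    finally show "pad n q ! j = map (\<lambda>j. \<Sum>i<length s.
        s ! i * chan_block D nz n (i mod nz) (pad n (N ! (i div nz))) ! j) [0..<n] ! j"
      using j by simp
  qed
  with s D ds that show thesis by blast
qed

lemma Min_le_if_chan_majorizes:
  assumes sc: "schur_concave H" and qc: "quasiconcave H" and N: "is_channel N"
    and q: "prob_vec q" "chan_majorizes N [q]"
  shows "Min (H ` set N) \<le> H q"
proof -
  define n where "n = max (out_dim N) (length q)"
  obtain nz s D where s: "prob_vec s" "length s = length N * nz" and D: "channel (n * nz) n D"
    and ds: "\<forall>z<nz. \<forall>y'<n. (\<Sum>y<n. D ! (y * nz + z) ! y') = 1"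
    and mix: "pad n q = map (\<lambda>j. \<Sum>i<length s.
        s ! i * chan_block D nz n (i mod nz) (pad n (N ! (i div nz))) ! j) [0..<n]"
    by (rule chan_majorizes_singletonE[OF q(2) n_def])
  have block: "prob_vec (chan_block D nz n z (pad n c)) \<and> length (chan_block D nz n z (pad n c)) = n
      \<and> Min (H ` set N) \<le> H (chan_block D nz n z (pad n c))"
    if c: "c \<in> set N" and z: "z < nz" for c z
  proof -
    have pc: "prob_vec c" "length c \<le> n" using is_channel_column[OF N c] by (auto simp: n_def)
    then have pad: "prob_vec (pad n c)" "length (pad n c) = n"
      by (simp_all add: prob_vec_pad length_pad)
    have ds_z: "\<forall>y'<n. (\<Sum>y<n. D ! (y * nz + z) ! y') = 1" using ds z by blast
    have "Min (H ` set N) \<le> H c" using c by simp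
    also have "\<dots> = H (pad n c)" using schur_concave_pad_eq[OF sc pc] by simp
    also have "\<dots> \<le> H (chan_block D nz n z (pad n c))"
      by (rule schur_concave_le[OF sc pad(1) prob_vec_chan_block[OF D z pad]
            majorizes_chan_block[OF D ds_z z pad(2)]])
    finally show ?thesis
      using prob_vec_chan_block[OF D z pad] by (simp add: chan_block_def)
  qed
  have "Min (H ` set N) \<le> H (pad n q)"
    unfolding mix
  proof (rule quasiconcave_Min_le[OF qc s(1)])
    fix i assume i: "i < length s"
    then have "0 < nz" using s(2) by (cases nz) auto
    then have "N ! (i div nz) \<in> set N" "i mod nz < nz"
      using i s(2) by (auto simp: less_mult_imp_div_less)
    then show "prob_vec (chan_block D nz n (i mod nz) (pad n (N ! (i div nz))))
        \<and> length (chan_block D nz n (i mod nz) (pad n (N ! (i div nz)))) = n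
        \<and> Min (H ` set N) \<le> H (chan_block D nz n (i mod nz) (pad n (N ! (i div nz))))"
      by (rule block)
  qed
  then show ?thesis
    using schur_concave_pad_eq[OF sc q(1)] by (simp add: n_def)
qed

subsection \<open>The maximal extension\<close>

text \<open>Every column is obtained from the channel by a deterministic preprocessing and the
  identity postprocessing, with a trivial side register.\<close>

lemma chan_maj_same_column:
  assumes N: "channel L n N" and x0: "x0 < L"
  shows "chan_maj_same n N [N ! x0]"
proof -
  define S :: "real list list" where "S = [map (\<lambda>x. if x = x0 then 1 else 0) [0..<L]]"
  define D :: "real list list" where
    "D = map (\<lambda>y. map (\<lambda>y'. if y = y' then 1 else 0) [0..<n]) [0..<n]"
  have "channel 1 (L * 1) S" "channel (n * 1) n D"
    using x0 by (auto simp: channel_def prob_vec_def S_def D_def sum_list_map_upt_zero)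
  moreover have "\<forall>z<1. \<forall>y'<n. (\<Sum>y<n. D ! (y * 1 + z) ! y') = 1"
    by (simp add: D_def)
  moreover have "[N ! x0] ! x' ! y' = (\<Sum>x<L. \<Sum>z<1. \<Sum>y<n.
      D ! (y * 1 + z) ! y' * (N ! x ! y) * (S ! x' ! (x * 1 + z)))"
    if x': "x' < 1" and y': "y' < n" for x' y'
  proof -
    have D_entry: "D ! y ! y' = (if y = y' then 1 else 0)" if "y < n" for y
      using that y' by (simp add: D_def)
    have "(\<Sum>z<1. \<Sum>y<n. D ! (y * 1 + z) ! y' * (N ! x ! y) * (S ! x' ! (x * 1 + z)))
        = (if x = x0 then N ! x ! y' else 0)" if "x < L" for x
    proof -
      have "(\<Sum>y<n. D ! y ! y' * (N ! x ! y)) = (\<Sum>y<n. if y = y' then N ! x ! y else 0)"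
        by (intro sum.cong) (simp_all add: D_entry)
      also have "\<dots> = N ! x ! y'" using y' by simp
      finally have "(\<Sum>y<n. D ! y ! y' * (N ! x ! y)) = N ! x ! y'" .
      then show ?thesis
        using that x' by (simp add: S_def sum_distrib_right[symmetric])
    qed
    then have "(\<Sum>x<L. \<Sum>z<1. \<Sum>y<n. D ! (y * 1 + z) ! y' * (N ! x ! y) * (S ! x' ! (x * 1 + z)))
        = (\<Sum>x<L. if x = x0 then N ! x ! y' else 0)"
      by (intro sum.cong refl) simp
    then show ?thesis using x' x0 by simp
  qed
  ultimately show ?thesis
    using N unfolding chan_maj_same_def channel_def by (intro exI[of _ 1]) auto
qed

lemma chan_majorizes_column:
  assumes N: "is_channel N" and x0: "x0 < length N"
  shows "chan_majorizes N [N ! x0]"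
proof -
  have "map (pad (out_dim N)) N = N"
    using is_channel_column[OF N] by (auto intro: map_idI pad_eq_self)
  moreover have "out_dim [N ! x0] = out_dim N"
    using is_channel_column[OF N nth_mem[OF x0]] by (simp add: out_dim_def)
  moreover have "chan_maj_same (out_dim N) N [N ! x0]"
    using N x0 by (intro chan_maj_same_column) (auto simp: is_channel_def out_dim_def)
  ultimately show ?thesis
    using is_channel_column[OF N nth_mem[OF x0]]
    by (simp add: chan_majorizes_def pad_eq_self)
qed

lemma max_ext_eq_Min:
  assumes sc: "schur_concave H" and qc: "quasiconcave H" and N: "is_channel N"
  shows "max_ext H N = Min (H ` set N)"
  unfolding max_ext_def
proof (rule cInf_eq_minimum)
  have "set N \<noteq> {}" using N by (simp add: is_channel_def)
  then have "Min (H ` set N) \<in> H ` set N" by simp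
  then obtain c where "c \<in> set N" "H c = Min (H ` set N)" by (metis imageE)
  then obtain x0 where x0: "x0 < length N" "H (N ! x0) = Min (H ` set N)"
    by (auto simp: in_set_conv_nth)
  then show "Min (H ` set N) \<in> {H q |q. prob_vec q \<and> chan_majorizes N [q]}"
    using chan_majorizes_column[OF N x0(1)] is_channel_column[OF N nth_mem[OF x0(1)]] by force
next
  fix h assume "h \<in> {H q |q. prob_vec q \<and> chan_majorizes N [q]}"
  then show "Min (H ` set N) \<le> h" using Min_le_if_chan_majorizes[OF sc qc N] by blast
qed

lemma length_tensor: "length (tensor p q) = length p * length q"
  by (induct p) (auto simp: tensor_def)

lemma sum_list_tensor: "sum_list (tensor p q) = sum_list p * (sum_list q :: real)"
  by (induct p) (auto simp: tensor_def sum_list_const_mult distrib_right)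

lemma prob_vec_tensor:
  assumes "prob_vec p" "prob_vec q"
  shows "prob_vec (tensor p q)"
proof -
  have "\<forall>x\<in>set (tensor p q). 0 \<le> x" using assms by (auto simp: prob_vec_def tensor_def)
  then show ?thesis using assms by (simp add: prob_vec_def sum_list_tensor)
qed

lemma set_chan_tensor: "set (chan_tensor N M) = (\<lambda>(c, d). tensor c d) ` (set N \<times> set M)"
  by (auto simp: chan_tensor_def)

lemma is_channel_chan_tensor:
  assumes N: "is_channel N" and M: "is_channel M"
  shows "is_channel (chan_tensor N M)"
proof -
  have cols: "prob_vec e \<and> length e = out_dim N * out_dim M" if "e \<in> set (chan_tensor N M)" for e
    using that is_channel_column[OF N] is_channel_column[OF M]
    by (auto simp: set_chan_tensor prob_vec_tensor length_tensor)
  have "set (chan_tensor N M) \<noteq> {}"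
    using N M by (simp add: set_chan_tensor is_channel_def)
  then show ?thesis
    using cols[of "hd (chan_tensor N M)"] cols by (auto simp: is_channel_def channel_def)
qed

lemma Min_add_Times:
  fixes f :: "'a \<Rightarrow> 'c::linordered_ab_semigroup_add" and g :: "'b \<Rightarrow> 'c"
  assumes "finite A" "A \<noteq> {}" "finite B" "B \<noteq> {}"
  shows "Min ((\<lambda>(a, b). f a + g b) ` (A \<times> B)) = Min (f ` A) + Min (g ` B)"
proof (rule Min_eqI)
  have "Min (f ` A) \<in> f ` A" "Min (g ` B) \<in> g ` B" using assms by simp_all
  then obtain a b where "a \<in> A" "f a = Min (f ` A)" "b \<in> B" "g b = Min (g ` B)"
    by (metis imageE)
  then show "Min (f ` A) + Min (g ` B) \<in> (\<lambda>(a, b). f a + g b) ` (A \<times> B)"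
    by force
next
  fix y assume "y \<in> (\<lambda>(a, b). f a + g b) ` (A \<times> B)"
  then show "Min (f ` A) + Min (g ` B) \<le> y"
    using assms by (auto intro!: add_mono)
qed (use assms in simp)

theorem mainTheorem16:
  fixes H :: "real list \<Rightarrow> real" and N M :: "real list list"
  assumes "classical_entropy H"
    and "quasiconcave H"
    and "is_channel N"
    and "is_channel M"
  shows "max_ext H (chan_tensor N M) = max_ext H N + max_ext H M"
proof -
  have sc: "schur_concave H" and add: "additive H"
    using assms(1) by (simp_all add: classical_entropy_def)
  have "H ` set (chan_tensor N M) = (\<lambda>(c, d). H c + H d) ` (set N \<times> set M)"
    using add is_channel_column[OF assms(3)] is_channel_column[OF assms(4)]
    unfolding set_chan_tensor additive_def by (force simp: image_image)
  moreover have "set N \<noteq> {}" "set M \<noteq> {}"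
    using assms(3,4) by (simp_all add: is_channel_def)
  ultimately show ?thesis
    using max_ext_eq_Min[OF sc assms(2)] is_channel_chan_tensor[OF assms(3,4)] assms(3,4)
    by (simp add: Min_add_Times)
qed

end
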